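(* Let $g\in L^2(\mathbb{R})$ with $\|g\|_\infty<\infty$ be such that $g\ast F_\mu\in L^2(\mathbb{R})$ for every $\mu\in\mathcal{P}_2(\mathbb{R})$, and let $f:\mathcal{P}_2(\mathbb{R})\to L^2(\mathbb{R})$, $f(\mu)(t):=\int g(t-\omega)F_\mu(\omega)\,d\omega=(g\ast F_\mu)(t)$, with lift $\hat f(X)=f(\mathcal{L}(X))$ on $L^2(\Omega,\mathbb{R})$. Then for all $X,Y\in L^2(\Omega,\mathbb{R})$ and $v\in L^2(\mathbb{R})$, $$\langle\hat f(X+Y),v\rangle_{L^2(\mathbb{R})}=\langle\hat f(X),v\rangle_{L^2(\mathbb{R})}-\langle\mathbb{E}[g(\cdot-X)Y],v\rangle_{L^2(\mathbb{R})}+R_v,$$ with $R_v=-\mathbb{E}\Big[\int_0^1\big((v\ast\check g)(X+\lambda Y)-(v\ast\check g)(X)\big)Y\,d\lambda\Big]$, where $\check g(s)=g(-s)$. Moreover $\sup_{\|v\|_{L^2(\mathbb{R})}\le1}|R_v|=o(\|Y\|_{L^2(\Omega,\mathbb{R})})$ as $\|Y\|_{L^2(\Omega,\mathbb{R})}\to0$; hence $\hat f$ is Fréchet differentiable with $D\hat f(X)Y(t)=-\mathbb{E}[g(t-X)Y]$.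
   Context: $(\Omega,\mathcal{F},\mathbb{P})$ complete atomless probability space, $\Omega$ Polish. $\mathcal{P}_2(\mathbb{R})$ is the set of Borel probability measures on $\mathbb{R}$ with finite second moment, $F_\mu(\omega)=\mu((-\infty,\omega])$ the distribution function, $\ast$ convolution on $\mathbb{R}$. *)

theory Defs
  imports "HOL-Probability.Probability"
begin

definition sq_int :: "(real \<Rightarrow> real) \<Rightarrow> bool" where
  "sq_int f \<longleftrightarrow> f \<in> borel_measurable lborel \<and> integrable lborel (\<lambda>t. (f t)^2)"

definition L2_inner :: "(real \<Rightarrow> real) \<Rightarrow> (real \<Rightarrow> real) \<Rightarrow> real" where
  "L2_inner a b = (LINT t|lborel. a t * b t)"

definition L2_norm :: "(real \<Rightarrow> real) \<Rightarrow> real" where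
  "L2_norm a = sqrt (LINT t|lborel. (a t)^2)"

definition RV_L2 :: "'a measure \<Rightarrow> ('a \<Rightarrow> real) \<Rightarrow> bool" where
  "RV_L2 M X \<longleftrightarrow> X \<in> borel_measurable M \<and> integrable M (\<lambda>w. (X w)^2)"

definition RV_norm :: "'a measure \<Rightarrow> ('a \<Rightarrow> real) \<Rightarrow> real" where
  "RV_norm M X = sqrt (LINT w|M. (X w)^2)"

definition P2 :: "real measure \<Rightarrow> bool" where
  "P2 \<mu> \<longleftrightarrow> prob_space \<mu> \<and> sets \<mu> = sets borel \<and> integrable \<mu> (\<lambda>x. x^2)"

definition conv_fun :: "(real \<Rightarrow> real) \<Rightarrow> (real \<Rightarrow> real) \<Rightarrow> real \<Rightarrow> real" where
  "conv_fun a b s = (LINT u|lborel. a (s - u) * b u)"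

definition gcheck :: "(real \<Rightarrow> real) \<Rightarrow> real \<Rightarrow> real" where
  "gcheck g s = g (- s)"

definition fconv :: "(real \<Rightarrow> real) \<Rightarrow> real measure \<Rightarrow> real \<Rightarrow> real" where
  "fconv g \<mu> t = (LINT w|lborel. g (t - w) * cdf \<mu> w)"

definition lift :: "(real \<Rightarrow> real) \<Rightarrow> 'a measure \<Rightarrow> ('a \<Rightarrow> real) \<Rightarrow> real \<Rightarrow> real" where
  "lift g M X = fconv g (distr M borel X)"

definition EgY :: "(real \<Rightarrow> real) \<Rightarrow> 'a measure \<Rightarrow> ('a \<Rightarrow> real) \<Rightarrow> ('a \<Rightarrow> real) \<Rightarrow> real \<Rightarrow> real" where
  "EgY g M X Y t = (LINT w|M. g (t - X w) * Y w)"

definition Rem :: "(real \<Rightarrow> real) \<Rightarrow> 'a measure \<Rightarrow> ('a \<Rightarrow> real) \<Rightarrow> ('a \<Rightarrow> real) \<Rightarrow> (real \<Rightarrow> real) \<Rightarrow> real" where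
  "Rem g M X Y v = - (LINT w|M. (LINT l:{0..1}|lborel.
      (conv_fun v (gcheck g) (X w + l * Y w) - conv_fun v (gcheck g) (X w)) * Y w))"

definition complete_measure_space :: "'a measure \<Rightarrow> bool" where
  "complete_measure_space M \<longleftrightarrow> (\<forall>A\<in>null_sets M. \<forall>B. B \<subseteq> A \<longrightarrow> B \<in> sets M)"

definition atomless :: "'a measure \<Rightarrow> bool" where
  "atomless M \<longleftrightarrow> (\<forall>A\<in>sets M. measure M A > 0 \<longrightarrow>
      (\<exists>B\<in>sets M. B \<subseteq> A \<and> 0 < measure M B \<and> measure M B < measure M A))"

end

theory Submission
  imports Defs
begin

(* f is linear in the distribution function, so f(L(X + Y)) - f(L(X)) = g * (F_{X+Y} - F_X), and
   F_{X+Y}(u) - F_X(u) = E[1{X + Y <= u} - 1{X <= u}].  Pairing with v and applying Fubini twice turns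
   the increment into E[ int (1{X + Y <= u} - 1{X <= u}) c(u) du ] with c = v * gcheck, and the
   substitution u = X + l Y gives - E[Y int_0^1 c(X + l Y) dl]; subtracting the linear term leaves R_v.
   The correlation c is bounded by |v| |g| and has modulus of continuity |v| |g(. - h) - g|, which
   tends to 0 by continuity of translation in L2, uniformly in |v| <= 1; hence R_v = o(|Y|).
   Testing the expansion against the remainder function itself gives the Frechet estimate in L2. *)

lemma square_integrable_mult:
  fixes f g :: "'a \<Rightarrow> real"
  assumes [measurable]: "f \<in> borel_measurable M" "g \<in> borel_measurable M"
    and "integrable M (\<lambda>x. (f x)\<^sup>2)" "integrable M (\<lambda>x. (g x)\<^sup>2)"
  shows "integrable M (\<lambda>x. f x * g x)"
proof (rule Bochner_Integration.integrable_bound)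
  show "integrable M (\<lambda>x. (f x)\<^sup>2 + (g x)\<^sup>2)"
    using assms by auto
  have "2 * \<bar>f x * g x\<bar> \<le> (f x)\<^sup>2 + (g x)\<^sup>2" for x
    using sum_squares_bound[of "\<bar>f x\<bar>" "\<bar>g x\<bar>"] by (simp add: abs_mult)
  moreover have "0 \<le> \<bar>f x * g x\<bar>" for x
    by simp
  ultimately show "AE x in M. norm (f x * g x) \<le> norm ((f x)\<^sup>2 + (g x)\<^sup>2)"
    by (intro AE_I2) (smt (verit) real_norm_def)
qed simp

lemma square_integrable_add:
  fixes f g :: "'a \<Rightarrow> real"
  assumes [measurable]: "f \<in> borel_measurable M" "g \<in> borel_measurable M"
    and "integrable M (\<lambda>x. (f x)\<^sup>2)" "integrable M (\<lambda>x. (g x)\<^sup>2)"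
  shows "integrable M (\<lambda>x. (f x + g x)\<^sup>2)"
proof -
  have "integrable M (\<lambda>x. (f x)\<^sup>2 + 2 * (f x * g x) + (g x)\<^sup>2)"
    using assms square_integrable_mult[OF assms] by auto
  then show ?thesis
    by (simp add: power2_sum ac_simps)
qed

lemma integral_abs_mult_le:
  fixes f g :: "'a \<Rightarrow> real"
  assumes [measurable]: "f \<in> borel_measurable M" "g \<in> borel_measurable M"
    and f2: "integrable M (\<lambda>x. (f x)\<^sup>2)" and g2: "integrable M (\<lambda>x. (g x)\<^sup>2)"
  shows "(LINT x|M. \<bar>f x * g x\<bar>) \<le> sqrt (LINT x|M. (f x)\<^sup>2) * sqrt (LINT x|M. (g x)\<^sup>2)"
proof -
  have fg: "integrable M (\<lambda>x. \<bar>f x * g x\<bar>)"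
    using square_integrable_mult[OF assms] by simp
  have "ennreal ((LINT x|M. \<bar>f x * g x\<bar>)\<^sup>2) = (\<integral>\<^sup>+x. ennreal \<bar>f x\<bar> * ennreal \<bar>g x\<bar> \<partial>M)\<^sup>2"
    using nn_integral_eq_integral[OF fg] by (simp add: abs_mult ennreal_mult ennreal_power)
  also have "\<dots> \<le> (\<integral>\<^sup>+x. ennreal \<bar>f x\<bar> ^ 2 \<partial>M) * (\<integral>\<^sup>+x. ennreal \<bar>g x\<bar> ^ 2 \<partial>M)"
    by (rule Cauchy_Schwarz_nn_integral) measurable
  also have "\<dots> = ennreal ((LINT x|M. (f x)\<^sup>2) * (LINT x|M. (g x)\<^sup>2))"
    using nn_integral_eq_integral[OF f2] nn_integral_eq_integral[OF g2]
    by (simp add: ennreal_power ennreal_mult)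
  finally have "(LINT x|M. \<bar>f x * g x\<bar>)\<^sup>2 \<le> (LINT x|M. (f x)\<^sup>2) * (LINT x|M. (g x)\<^sup>2)"
    by (auto simp: ennreal_le_iff2)
  then have "sqrt ((LINT x|M. \<bar>f x * g x\<bar>)\<^sup>2) \<le> sqrt ((LINT x|M. (f x)\<^sup>2) * (LINT x|M. (g x)\<^sup>2))"
    by (rule real_sqrt_le_mono)
  then show ?thesis
    by (simp add: real_sqrt_mult)
qed

lemma sq_int_add:
  assumes "sq_int f" "sq_int g"
  shows "sq_int (\<lambda>t. f t + g t)"
  using assms square_integrable_add[of f lborel g] by (simp add: sq_int_def borel_measurable_add)

lemma sq_int_minus: "sq_int f \<Longrightarrow> sq_int (\<lambda>t. - f t)"
  by (simp add: sq_int_def)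

lemma sq_int_integrable_mult:
  assumes "sq_int f" "sq_int g"
  shows "integrable lborel (\<lambda>t. f t * g t)"
  using assms square_integrable_mult[of f lborel g] by (simp add: sq_int_def)

lemma sq_int_integral_abs_mult_le:
  assumes "sq_int f" "sq_int g"
  shows "(LINT t|lborel. \<bar>f t * g t\<bar>) \<le> L2_norm f * L2_norm g"
  using assms integral_abs_mult_le[of f lborel g] by (simp add: sq_int_def L2_norm_def)

lemma L2_norm_nonneg: "0 \<le> L2_norm f"
  by (simp add: L2_norm_def)

lemma L2_norm_square: "(L2_norm f)\<^sup>2 = (LINT t|lborel. (f t)\<^sup>2)"
  by (simp add: L2_norm_def integral_nonneg_AE)

lemma lborel_integral_shift:
  fixes f :: "real \<Rightarrow> real"
  shows "(LINT x|lborel. f (x + h)) = (LINT x|lborel. f x)"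
  using lborel_integral_real_affine[where c=1 and t=h and f=f] by (simp add: add.commute)

lemma lborel_integrable_shift_iff:
  fixes f :: "real \<Rightarrow> real"
  shows "integrable lborel (\<lambda>x. f (x + h)) \<longleftrightarrow> integrable lborel f"
  using lborel_integrable_real_affine_iff[where c=1 and t=h and f=f] by (simp add: add.commute)

lemma sq_int_shift:
  assumes "sq_int g"
  shows "sq_int (\<lambda>t. g (t - s))" and "L2_norm (\<lambda>t. g (t - s)) = L2_norm g"
proof -
  have [measurable]: "g \<in> borel_measurable borel" and "integrable lborel (\<lambda>t. (g t)\<^sup>2)"
    using assms unfolding sq_int_def by auto
  then show "sq_int (\<lambda>t. g (t - s))"
    using lborel_integrable_shift_iff[of "\<lambda>t. (g t)\<^sup>2" "- s"] by (simp add: sq_int_def)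
  show "L2_norm (\<lambda>t. g (t - s)) = L2_norm g"
    using lborel_integral_shift[of "\<lambda>t. (g t)\<^sup>2" "- s"] by (simp add: L2_norm_def)
qed

lemma Fubini_integrable_lborel:
  fixes H :: "'a \<Rightarrow> real \<Rightarrow> real"
  assumes "sigma_finite_measure M" and [measurable]: "case_prod H \<in> borel_measurable (M \<Otimes>\<^sub>M lborel)"
    and H: "\<And>w. integrable lborel (H w)" and Z: "integrable M Z"
    and bound: "\<And>w. (LINT t|lborel. \<bar>H w t\<bar>) \<le> Z w"
  shows "integrable (M \<Otimes>\<^sub>M lborel) (case_prod H)"
proof -
  interpret pair_sigma_finite M lborel
    using assms(1) by (simp add: pair_sigma_finite_def lborel.sigma_finite_measure_axioms)
  show ?thesis
  proof (rule Fubini_integrable)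
    show "integrable M (\<lambda>w. LINT t|lborel. norm (case_prod H (w, t)))"
    proof (rule Bochner_Integration.integrable_bound[OF Z])
      show "(\<lambda>w. LINT t|lborel. norm (case_prod H (w, t))) \<in> borel_measurable M"
        by (rule lborel.borel_measurable_lebesgue_integral) measurable
      have "norm (LINT t|lborel. \<bar>H w t\<bar>) \<le> norm (Z w)" for w
        using bound[of w] integral_nonneg_AE[of "\<lambda>t. \<bar>H w t\<bar>" lborel] by simp
      then show "AE w in M. norm (LINT t|lborel. norm (case_prod H (w, t))) \<le> norm (Z w)"
        by simp
    qed
  qed (use H in simp_all)
qed

lemma RV_L2_add:
  assumes "RV_L2 M X" "RV_L2 M Y"
  shows "RV_L2 M (\<lambda>w. X w + Y w)"
  using assms square_integrable_add[of X M Y] by (simp add: RV_L2_def borel_measurable_add)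

lemma P2_distr:
  assumes "prob_space M" and "RV_L2 M Z"
  shows "P2 (distr M borel Z)"
proof -
  have [measurable]: "Z \<in> borel_measurable M"
    using assms(2) by (simp add: RV_L2_def)
  then show ?thesis
    using assms prob_space.prob_space_distr[of M Z borel] integrable_distr_eq[of Z M borel "\<lambda>x. x\<^sup>2"]
    by (simp add: P2_def RV_L2_def)
qed

lemma
  assumes "prob_space M" and "RV_L2 M Y"
  shows RV_L2_integrable: "integrable M Y"
    and expectation_abs_le_RV_norm: "(LINT w|M. \<bar>Y w\<bar>) \<le> RV_norm M Y"
proof -
  interpret prob_space M by fact
  have [measurable]: "Y \<in> borel_measurable M" and Y2: "integrable M (\<lambda>w. (Y w)\<^sup>2)"
    using assms(2) by (auto simp: RV_L2_def)
  show "integrable M Y"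
    using Y2 by (rule square_integrable_imp_integrable[rotated]) measurable
  show "(LINT w|M. \<bar>Y w\<bar>) \<le> RV_norm M Y"
    using integral_abs_mult_le[of Y M "\<lambda>_. 1"] Y2 by (simp add: RV_norm_def prob_space)
qed

lemma RV_norm_nonneg: "0 \<le> RV_norm M Y"
  by (simp add: RV_norm_def)

lemma RV_norm_square: "(RV_norm M Y)\<^sup>2 = (LINT w|M. (Y w)\<^sup>2)"
  by (simp add: RV_norm_def integral_nonneg_AE)

lemma (in prob_space) square_expectation_le:
  fixes Z :: "'a \<Rightarrow> real"
  assumes [measurable]: "Z \<in> borel_measurable M" and "integrable M (\<lambda>w. (Z w)\<^sup>2)"
  shows "(expectation Z)\<^sup>2 \<le> expectation (\<lambda>w. (Z w)\<^sup>2)"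
proof -
  have "\<bar>expectation Z\<bar> \<le> expectation (\<lambda>w. \<bar>Z w * 1\<bar>)"
    using integral_abs_bound[of M Z] by simp
  also have "\<dots> \<le> sqrt (expectation (\<lambda>w. (Z w)\<^sup>2))"
    using integral_abs_mult_le[of Z M "\<lambda>_. 1"] assms by (simp add: prob_space)
  finally have "\<bar>expectation Z\<bar>\<^sup>2 \<le> (sqrt (expectation (\<lambda>w. (Z w)\<^sup>2)))\<^sup>2"
    by (rule power_mono) simp
  then show ?thesis
    by (simp add: integral_nonneg_AE)
qed

section \<open>Continuity of translation\<close>

lemma lborel_inner_compact:
  fixes A :: "real set"
  assumes A: "A \<in> sets borel" and fin: "emeasure lborel A < \<infinity>" and e: "e > 0"
  obtains K where "compact K" "K \<subseteq> A" "measure lborel (A - K) < e"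
proof (cases "measure lborel A < e")
  case True
  then show ?thesis
    using that[of "{}"] by simp
next
  case False
  let ?N = "density lborel (indicator A)"
  have "emeasure ?N A = (SUP K \<in> {K. K \<subseteq> A \<and> compact K}. emeasure ?N K)"
    by (rule inner_regular) (use A fin in \<open>auto simp: emeasure_restricted\<close>)
  also have "\<dots> = (SUP K \<in> {K. K \<subseteq> A \<and> compact K}. emeasure lborel K)"
    using A by (intro SUP_cong) (auto simp: emeasure_restricted compact_imp_closed Int_absorb1)
  moreover have "ennreal (measure lborel A - e) < emeasure lborel A"
    using fin e False by (simp add: emeasure_eq_ennreal_measure ennreal_lessI)
  ultimately have "ennreal (measure lborel A - e) < (SUP K \<in> {K. K \<subseteq> A \<and> compact K}. emeasure lborel K)"
    using A by (simp add: emeasure_restricted)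
  then obtain K where K: "K \<subseteq> A" "compact K" "ennreal (measure lborel A - e) < emeasure lborel K"
    by (auto simp: less_SUP_iff)
  have "measure lborel A - e < measure lborel K"
    using K(3) False emeasure_compact_finite[OF K(2)] by (simp add: emeasure_eq_ennreal_measure ennreal_less_iff)
  moreover have "measure lborel (A - K) = measure lborel A - measure lborel K"
    using A fin K by (intro measure_Diff) (auto simp: compact_imp_closed fmeasurable_def)
  ultimately show ?thesis
    using that K by simp
qed

lemma lborel_compact_open_sandwich:
  fixes A :: "real set"
  assumes A: "A \<in> sets borel" and fin: "emeasure lborel A < \<infinity>" and e: "e > 0"
  obtains K d U where "K \<subseteq> A" "d > 0" "\<And>x y. x \<in> K \<Longrightarrow> \<bar>y - x\<bar> < d \<Longrightarrow> y \<in> U"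
    "A - K \<in> fmeasurable lborel" "U - K \<in> fmeasurable lborel"
    "measure lborel (A - K) < e" "measure lborel (U - K) < e"
proof -
  obtain K where K: "compact K" "K \<subseteq> A" "measure lborel (A - K) < e"
    using lborel_inner_compact[OF A fin e] by auto
  have K_borel: "K \<in> sets borel"
    using K(1) by (simp add: borel_closed compact_imp_closed)
  obtain U where U: "open U" "K \<subseteq> U" "emeasure lborel (U - K) < e"
    using outer_regular_lborel[OF K_borel e] by auto
  obtain d where d: "d > 0" "(\<Union>x\<in>K. ball x d) \<subseteq> U"
    using compact_subset_open_imp_ball_epsilon_subset[OF K(1) U(1,2)] by auto
  have "U - K \<in> fmeasurable lborel"
    using U K_borel by (auto simp: fmeasurable_def borel_open less_top[symmetric])
  moreover have "A - K \<in> fmeasurable lborel"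
    using A K_borel emeasure_mono[of "A - K" A lborel] fin by (auto simp: fmeasurable_def)
  moreover have "y \<in> U" if "x \<in> K" "\<bar>y - x\<bar> < d" for x y
    using d(2) that by (force simp: dist_real_def)
  ultimately show ?thesis
    using that[of K d U] K U(3) d(1) by (simp add: emeasure_eq_measure2 ennreal_less_iff)
qed

definition translation_continuous_L1 :: "(real \<Rightarrow> real) \<Rightarrow> bool" where
  "translation_continuous_L1 f \<longleftrightarrow>
    (\<forall>e>0. \<exists>d>0. \<forall>h. \<bar>h\<bar> < d \<longrightarrow> (LINT x|lborel. \<bar>f (x + h) - f x\<bar>) \<le> e)"

lemma translation_continuous_L1_indicator:
  fixes A :: "real set"
  assumes A: "A \<in> sets borel" and fin: "emeasure lborel A < \<infinity>"
  shows "translation_continuous_L1 (indicator A)"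
  unfolding translation_continuous_L1_def
proof (intro allI impI)
  fix e :: real
  assume "e > 0"
  then have "e/4 > 0"
    by simp
  then obtain K d U where KU: "K \<subseteq> A" "d > 0" "\<And>x y. x \<in> K \<Longrightarrow> \<bar>y - x\<bar> < d \<Longrightarrow> y \<in> U"
    "A - K \<in> fmeasurable lborel" "U - K \<in> fmeasurable lborel"
    "measure lborel (A - K) < e/4" "measure lborel (U - K) < e/4"
    using lborel_compact_open_sandwich[OF A fin] by blast
  define a :: "real \<Rightarrow> real" where "a = indicator (A - K)"
  define b :: "real \<Rightarrow> real" where "b = indicator (U - K)"
  have ab: "integrable lborel a" "integrable lborel b"
    using KU(4,5) by (auto simp: a_def b_def fmeasurable_def)
  then have ab_shift: "integrable lborel (\<lambda>x. a (x + h))" "integrable lborel (\<lambda>x. b (x + h))" for h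
    using lborel_integrable_shift_iff by blast+
  have "(LINT x|lborel. \<bar>indicator A (x + h) - indicator A x :: real\<bar>) \<le> e" if "\<bar>h\<bar> < d" for h
  proof -
    \<comment> \<open>a point that crosses the boundary of A lies in A - K or, being within d of K, in U - K\<close>
    have "\<bar>indicator A (x + h) - indicator A x :: real\<bar> \<le> a (x + h) + a x + b (x + h) + b x" for x
    proof -
      have "x \<in> U" if "x + h \<in> K"
        using KU(3)[OF that, of x] \<open>\<bar>h\<bar> < d\<close> by simp
      moreover have "x + h \<in> U" if "x \<in> K"
        using KU(3)[OF that, of "x + h"] \<open>\<bar>h\<bar> < d\<close> by simp
      ultimately show ?thesis
        using KU(1) by (auto simp: a_def b_def indicator_def)
    qed
    moreover have "integrable lborel (\<lambda>x. \<bar>indicator A (x + h) - indicator A x :: real\<bar>)"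
      using A fin lborel_integrable_shift_iff[of "indicator A" h] by simp
    ultimately have "(LINT x|lborel. \<bar>indicator A (x + h) - indicator A x :: real\<bar>)
        \<le> (LINT x|lborel. a (x + h) + a x + b (x + h) + b x)"
      using ab ab_shift by (intro integral_mono) auto
    also have "\<dots> = 2 * measure lborel (A - K) + 2 * measure lborel (U - K)"
      using ab ab_shift lborel_integral_shift[of a h] lborel_integral_shift[of b h] KU(4,5)
      by (simp add: a_def b_def)
    finally show ?thesis
      using KU(6,7) by simp
  qed
  then show "\<exists>d>0. \<forall>h. \<bar>h\<bar> < d \<longrightarrow> (LINT x|lborel. \<bar>indicator A (x + h) - indicator A x :: real\<bar>) \<le> e"
    using KU(2) by blast
qed

lemma translation_continuous_L1_scaleR:
  assumes "translation_continuous_L1 f"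
  shows "translation_continuous_L1 (\<lambda>x. f x *\<^sub>R c)"
  unfolding translation_continuous_L1_def
proof (intro allI impI)
  fix e :: real
  assume "e > 0"
  then have "e / (\<bar>c\<bar> + 1) > 0"
    by simp
  then obtain d where "d > 0" and d: "\<And>h. \<bar>h\<bar> < d \<Longrightarrow> (LINT x|lborel. \<bar>f (x + h) - f x\<bar>) \<le> e / (\<bar>c\<bar> + 1)"
    using assms unfolding translation_continuous_L1_def by blast
  have "(LINT x|lborel. \<bar>f (x + h) *\<^sub>R c - f x *\<^sub>R c\<bar>) \<le> e" if "\<bar>h\<bar> < d" for h
  proof -
    have "(LINT x|lborel. \<bar>f (x + h) *\<^sub>R c - f x *\<^sub>R c\<bar>) = \<bar>c\<bar> * (LINT x|lborel. \<bar>f (x + h) - f x\<bar>)"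
      by (simp add: abs_mult flip: left_diff_distrib)
    also have "\<dots> \<le> \<bar>c\<bar> * (e / (\<bar>c\<bar> + 1))"
      using d[OF that] by (intro mult_left_mono) auto
    also have "\<dots> \<le> e"
      using \<open>e > 0\<close> by (simp add: field_simps)
    finally show ?thesis .
  qed
  then show "\<exists>d>0. \<forall>h. \<bar>h\<bar> < d \<longrightarrow> (LINT x|lborel. \<bar>f (x + h) *\<^sub>R c - f x *\<^sub>R c\<bar>) \<le> e"
    using \<open>d > 0\<close> by blast
qed

lemma integrable_shift_diff:
  fixes f :: "real \<Rightarrow> real"
  assumes "integrable lborel f"
  shows "integrable lborel (\<lambda>x. f (x + h) - f x)"
  using assms lborel_integrable_shift_iff[of f h] by auto

lemma translation_continuous_L1_add:
  assumes f: "integrable lborel f" "translation_continuous_L1 f"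
    and g: "integrable lborel g" "translation_continuous_L1 g"
  shows "translation_continuous_L1 (\<lambda>x. f x + g x)"
  unfolding translation_continuous_L1_def
proof (intro allI impI)
  fix e :: real
  assume "e > 0"
  then have "e/2 > 0"
    by simp
  then obtain d1 d2 where "d1 > 0" "d2 > 0"
    and d1: "\<And>h. \<bar>h\<bar> < d1 \<Longrightarrow> (LINT x|lborel. \<bar>f (x + h) - f x\<bar>) \<le> e/2"
    and d2: "\<And>h. \<bar>h\<bar> < d2 \<Longrightarrow> (LINT x|lborel. \<bar>g (x + h) - g x\<bar>) \<le> e/2"
    using f(2) g(2) unfolding translation_continuous_L1_def by blast
  have "(LINT x|lborel. \<bar>(f (x + h) + g (x + h)) - (f x + g x)\<bar>) \<le> e" if h: "\<bar>h\<bar> < min d1 d2" for h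
  proof -
    note fg_shift = integrable_shift_diff[OF f(1), of h] integrable_shift_diff[OF g(1), of h]
    have "integrable lborel (\<lambda>x. \<bar>(f (x + h) - f x) + (g (x + h) - g x)\<bar>)"
      using fg_shift by auto
    then have "(LINT x|lborel. \<bar>(f (x + h) + g (x + h)) - (f x + g x)\<bar>)
        \<le> (LINT x|lborel. \<bar>f (x + h) - f x\<bar> + \<bar>g (x + h) - g x\<bar>)"
      using fg_shift by (intro integral_mono) (auto simp: algebra_simps)
    also have "\<dots> = (LINT x|lborel. \<bar>f (x + h) - f x\<bar>) + (LINT x|lborel. \<bar>g (x + h) - g x\<bar>)"
      using fg_shift by (simp add: Bochner_Integration.integral_add)
    also have "\<dots> \<le> e"
      using d1[of h] d2[of h] h by simp
    finally show ?thesis .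
  qed
  then show "\<exists>d>0. \<forall>h. \<bar>h\<bar> < d \<longrightarrow> (LINT x|lborel. \<bar>(f (x + h) + g (x + h)) - (f x + g x)\<bar>) \<le> e"
    using \<open>d1 > 0\<close> \<open>d2 > 0\<close> by (intro exI[of _ "min d1 d2"]) simp
qed

lemma integral_shift_diff_le_approx:
  fixes f s :: "real \<Rightarrow> real"
  assumes f: "integrable lborel f" and s: "integrable lborel s"
  shows "(LINT x|lborel. \<bar>f (x + h) - f x\<bar>)
    \<le> 2 * (LINT x|lborel. \<bar>f x - s x\<bar>) + (LINT x|lborel. \<bar>s (x + h) - s x\<bar>)"
proof -
  have fs: "integrable lborel (\<lambda>x. f x - s x)"
    using f s by auto
  then have fs_shift: "integrable lborel (\<lambda>x. f (x + h) - s (x + h))"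
    using lborel_integrable_shift_iff[of "\<lambda>x. f x - s x" h] by simp
  have "(LINT x|lborel. \<bar>f (x + h) - f x\<bar>)
      \<le> (LINT x|lborel. \<bar>f (x + h) - s (x + h)\<bar> + \<bar>s (x + h) - s x\<bar> + \<bar>f x - s x\<bar>)"
    using integrable_shift_diff[OF f] integrable_shift_diff[OF s] fs_shift fs
    by (intro integral_mono) auto
  also have "\<dots> = (LINT x|lborel. \<bar>f (x + h) - s (x + h)\<bar>) + (LINT x|lborel. \<bar>s (x + h) - s x\<bar>)
      + (LINT x|lborel. \<bar>f x - s x\<bar>)"
    using integrable_shift_diff[OF s] fs_shift fs by (simp add: Bochner_Integration.integral_add)
  also have "(LINT x|lborel. \<bar>f (x + h) - s (x + h)\<bar>) = (LINT x|lborel. \<bar>f x - s x\<bar>)"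
    using lborel_integral_shift[of "\<lambda>x. \<bar>f x - s x\<bar>" h] by simp
  finally show ?thesis
    by simp
qed

lemma translation_continuous_L1_approx:
  fixes f :: "real \<Rightarrow> real"
  assumes f: "integrable lborel f"
    and approx: "\<And>r. r > 0 \<Longrightarrow>
      \<exists>s. integrable lborel s \<and> translation_continuous_L1 s \<and> (LINT x|lborel. \<bar>f x - s x\<bar>) < r"
  shows "translation_continuous_L1 f"
  unfolding translation_continuous_L1_def
proof (intro allI impI)
  fix e :: real
  assume "e > 0"
  then obtain s where s: "integrable lborel s" "translation_continuous_L1 s"
    and fs: "(LINT x|lborel. \<bar>f x - s x\<bar>) < e/4"
    using approx[of "e/4"] by auto
  have "e/2 > 0"
    using \<open>e > 0\<close> by simp
  then obtain d where "d > 0" and d: "\<And>h. \<bar>h\<bar> < d \<Longrightarrow> (LINT x|lborel. \<bar>s (x + h) - s x\<bar>) \<le> e/2"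
    using s(2) unfolding translation_continuous_L1_def by blast
  have "(LINT x|lborel. \<bar>f (x + h) - f x\<bar>) \<le> e" if "\<bar>h\<bar> < d" for h
    using integral_shift_diff_le_approx[OF f s(1), of h] fs d[OF that] by linarith
  then show "\<exists>d>0. \<forall>h. \<bar>h\<bar> < d \<longrightarrow> (LINT x|lborel. \<bar>f (x + h) - f x\<bar>) \<le> e"
    using \<open>d > 0\<close> by blast
qed

lemma integrable_imp_translation_continuous_L1:
  fixes f :: "real \<Rightarrow> real"
  assumes "integrable lborel f"
  shows "translation_continuous_L1 f"
  using assms
proof (induct rule: integrable_induct)
  case (base A c)
  then show ?case
    by (intro translation_continuous_L1_scaleR translation_continuous_L1_indicator) auto
next
  case (add f g)
  then show ?case
    by (rule translation_continuous_L1_add)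
next
  case (lim f s)
  have [measurable]: "f \<in> borel_measurable lborel" "\<And>i. s i \<in> borel_measurable lborel"
    using lim(1,5) by (auto intro: borel_measurable_integrable)
  have "\<bar>f x - s i x\<bar> \<le> 3 * \<bar>f x\<bar>" for x i
    using lim(4)[of x i] abs_triangle_ineq4[of "f x" "s i x"] by simp
  moreover have "(\<lambda>i. f x - s i x) \<longlonglongrightarrow> f x - f x" for x
    using lim(3)[of x] by (intro tendsto_diff) auto
  ultimately have "(\<lambda>i. LINT x|lborel. \<bar>f x - s i x\<bar>) \<longlonglongrightarrow> (LINT (x::real)|lborel. 0::real)"
    using lim(5) by (intro integral_dominated_convergence[where w="\<lambda>x. 3 * \<bar>f x\<bar>"] AE_I2 tendsto_rabs_zero) auto
  then have "eventually (\<lambda>i. (LINT x|lborel. \<bar>f x - s i x\<bar>) < r) sequentially" if "r > 0" for r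
    using order_tendstoD(2) that by simp
  then have "\<exists>i. (LINT x|lborel. \<bar>f x - s i x\<bar>) < r" if "r > 0" for r
    using that by (meson eventually_sequentially order.refl)
  then show ?case
    using lim(1,2) by (intro translation_continuous_L1_approx[OF lim(5)]) blast
qed

lemma square_diff_le_signed_square_diff:
  fixes a b :: real
  shows "(a - b)\<^sup>2 \<le> 2 * \<bar>a * \<bar>a\<bar> - b * \<bar>b\<bar>\<bar>"
proof (cases "0 \<le> a * b")
  case True
  then have "\<bar>a - b\<bar> \<le> \<bar>a + b\<bar>"
    by (cases "0 \<le> a"; cases "0 \<le> b") (auto simp: zero_le_mult_iff)
  then have "(a - b)\<^sup>2 \<le> \<bar>a - b\<bar> * \<bar>a + b\<bar>"
    by (metis abs_ge_zero mult_left_mono power2_abs power2_eq_square)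
  also have "\<dots> = \<bar>a\<^sup>2 - b\<^sup>2\<bar>"
    by (simp add: abs_mult[symmetric] power2_eq_square algebra_simps)
  also have "\<dots> = \<bar>a * \<bar>a\<bar> - b * \<bar>b\<bar>\<bar>"
    using True by (cases "0 \<le> a") (auto simp: zero_le_mult_iff power2_eq_square abs_minus_commute)
  finally show ?thesis
    by (rule order_trans) simp
next
  case False
  then have "\<bar>a * \<bar>a\<bar> - b * \<bar>b\<bar>\<bar> = a\<^sup>2 + b\<^sup>2"
    by (cases "0 \<le> a") (auto simp: zero_le_mult_iff power2_eq_square)
  moreover have "(a - b)\<^sup>2 \<le> 2 * (a\<^sup>2 + b\<^sup>2)"
    using zero_le_power2[of "a + b"] by (simp add: power2_eq_square algebra_simps)
  ultimately show ?thesis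
    by simp
qed

lemma L2_translation_continuous:
  fixes g :: "real \<Rightarrow> real"
  assumes "sq_int g"
  shows "\<forall>e>0. \<exists>d>0. \<forall>h. \<bar>h\<bar> < d \<longrightarrow> (LINT x|lborel. (g (x + h) - g x)\<^sup>2) \<le> e"
proof (intro allI impI)
  fix e :: real
  assume "e > 0"
  have [measurable]: "g \<in> borel_measurable borel" and g2: "integrable lborel (\<lambda>x. (g x)\<^sup>2)"
    using assms unfolding sq_int_def by auto
  have g2_shift: "integrable lborel (\<lambda>x. (g (x + h))\<^sup>2)" for h
    using g2 lborel_integrable_shift_iff[of "\<lambda>x. (g x)\<^sup>2" h] by simp
  \<comment> \<open>reduce to continuity of translation in L1 of the integrable signed square g * abs g\<close>
  define \<phi> where "\<phi> x = g x * \<bar>g x\<bar>" for x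
  have "integrable lborel \<phi>"
    using g2 unfolding \<phi>_def by (rule Bochner_Integration.integrable_bound) (auto simp: abs_mult power2_eq_square)
  then obtain d where d: "d > 0" "\<And>h. \<bar>h\<bar> < d \<Longrightarrow> (LINT x|lborel. \<bar>\<phi> (x + h) - \<phi> x\<bar>) \<le> e/2"
    using integrable_imp_translation_continuous_L1 \<open>e > 0\<close> half_gt_zero
    unfolding translation_continuous_L1_def by blast
  have "(LINT x|lborel. (g (x + h) - g x)\<^sup>2) \<le> e" if "\<bar>h\<bar> < d" for h
  proof -
    have "(LINT x|lborel. (g (x + h) - g x)\<^sup>2) \<le> (LINT x|lborel. 2 * \<bar>\<phi> (x + h) - \<phi> x\<bar>)"
      using g2 g2_shift integrable_shift_diff[OF \<open>integrable lborel \<phi>\<close>, of h]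
      by (intro integral_mono square_integrable_add[where g="\<lambda>x. - g x", simplified])
        (auto simp: \<phi>_def square_diff_le_signed_square_diff)
    also have "\<dots> \<le> e"
      using d(2)[OF that] by simp
    finally show ?thesis .
  qed
  then show "\<exists>d>0. \<forall>h. \<bar>h\<bar> < d \<longrightarrow> (LINT x|lborel. (g (x + h) - g x)\<^sup>2) \<le> e"
    using d(1) by blast
qed

section \<open>Cross-correlation with g\<close>

definition xcorr :: "(real \<Rightarrow> real) \<Rightarrow> (real \<Rightarrow> real) \<Rightarrow> real \<Rightarrow> real" where
  "xcorr v g s = (LINT t|lborel. v t * g (t - s))"

lemma conv_fun_gcheck: "conv_fun v (gcheck g) = xcorr v g"
proof
  fix s
  show "conv_fun v (gcheck g) s = xcorr v g s"
    using lborel_integral_real_affine[where c="-1" and t=s and f="\<lambda>u. v (s - u) * g (- u)"]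
    by (simp add: conv_fun_def gcheck_def xcorr_def)
qed

lemma xcorr_measurable[measurable]:
  assumes "sq_int v" "sq_int g"
  shows "xcorr v g \<in> borel_measurable borel"
proof -
  have [measurable]: "g \<in> borel_measurable borel" "v \<in> borel_measurable borel"
    using assms unfolding sq_int_def by auto
  have "(\<lambda>s. LINT t|lborel. v t * g (t - s)) \<in> borel_measurable borel"
    by (rule lborel.borel_measurable_lebesgue_integral) measurable
  then show ?thesis
    by (simp add: xcorr_def[abs_def])
qed

lemma abs_xcorr_le:
  assumes "sq_int v" "sq_int g"
  shows "\<bar>xcorr v g s\<bar> \<le> L2_norm v * L2_norm g"
proof -
  have "\<bar>xcorr v g s\<bar> \<le> (LINT t|lborel. \<bar>v t * g (t - s)\<bar>)"
    unfolding xcorr_def by (rule integral_abs_bound)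
  also have "\<dots> \<le> L2_norm v * L2_norm g"
    using sq_int_integral_abs_mult_le[OF assms(1) sq_int_shift(1)[OF assms(2)]] sq_int_shift(2)[OF assms(2)]
    by simp
  finally show ?thesis .
qed

lemma abs_xcorr_diff_le:
  assumes v: "sq_int v" and g: "sq_int g"
  shows "\<bar>xcorr v g (s + h) - xcorr v g s\<bar> \<le> L2_norm v * L2_norm (\<lambda>x. g (x - h) - g x)"
proof -
  define k where "k t = g (t - (s + h)) - g (t - s)" for t
  have k: "sq_int k"
    unfolding k_def using sq_int_add[OF sq_int_shift(1)[OF g] sq_int_minus[OF sq_int_shift(1)[OF g]]] by simp
  have "xcorr v g (s + h) - xcorr v g s = (LINT t|lborel. v t * k t)"
    using sq_int_integrable_mult[OF v sq_int_shift(1)[OF g]]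
    by (simp add: xcorr_def k_def right_diff_distrib)
  also have "\<bar>\<dots>\<bar> \<le> (LINT t|lborel. \<bar>v t * k t\<bar>)"
    by (rule integral_abs_bound)
  also have "\<dots> \<le> L2_norm v * L2_norm k"
    using v k by (rule sq_int_integral_abs_mult_le)
  also have "L2_norm k = L2_norm (\<lambda>x. g (x - h) - g x)"
    using lborel_integral_shift[of "\<lambda>x. (g (x - h) - g x)\<^sup>2" "- s"]
    by (simp add: L2_norm_def k_def algebra_simps)
  finally show ?thesis .
qed

text \<open>The modulus is uniform over the unit ball of v: small increments are controlled by
  continuity of translation in L2, large ones by the uniform bound on the correlation.\<close>

lemma xcorr_increment_bound:
  assumes g: "sq_int g" and "e > 0"
  obtains \<eta> where "\<eta> > 0"
    "\<And>v s h. sq_int v \<Longrightarrow>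
      \<bar>xcorr v g (s + h) - xcorr v g s\<bar> \<le> L2_norm v * (e + 2 * L2_norm g / \<eta> * \<bar>h\<bar>)"
proof -
  obtain \<eta> where \<eta>: "\<eta> > 0" "\<And>h. \<bar>h\<bar> < \<eta> \<Longrightarrow> (LINT x|lborel. (g (x + h) - g x)\<^sup>2) \<le> e\<^sup>2"
    using L2_translation_continuous[OF g] \<open>e > 0\<close> by (meson zero_less_power)
  have "\<bar>xcorr v g (s + h) - xcorr v g s\<bar> \<le> L2_norm v * (e + 2 * L2_norm g / \<eta> * \<bar>h\<bar>)"
    if v: "sq_int v" for v s h
  proof -
    have "\<bar>xcorr v g (s + h) - xcorr v g s\<bar> \<le> L2_norm v * e"
      if "\<bar>h\<bar> < \<eta>"
    proof -
      have "L2_norm (\<lambda>x. g (x - h) - g x) \<le> sqrt (e\<^sup>2)"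
        using \<eta>(2)[of "- h"] that unfolding L2_norm_def by (intro real_sqrt_le_mono) simp
      then have "L2_norm v * L2_norm (\<lambda>x. g (x - h) - g x) \<le> L2_norm v * e"
        using \<open>e > 0\<close> L2_norm_nonneg[of v] by (intro mult_left_mono) simp_all
      then show ?thesis
        using abs_xcorr_diff_le[OF v g, of s h] by linarith
    qed
    moreover have "\<bar>xcorr v g (s + h) - xcorr v g s\<bar> \<le> L2_norm v * (2 * L2_norm g * (\<bar>h\<bar> / \<eta>))"
      if "\<not> \<bar>h\<bar> < \<eta>"
    proof -
      have "\<bar>xcorr v g (s + h) - xcorr v g s\<bar> \<le> L2_norm v * L2_norm g + L2_norm v * L2_norm g"
        using abs_xcorr_le[OF v g, of "s + h"] abs_xcorr_le[OF v g, of s] by linarith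
      also have "\<dots> = L2_norm v * (2 * L2_norm g * 1)"
        by simp
      also have "\<dots> \<le> L2_norm v * (2 * L2_norm g * (\<bar>h\<bar> / \<eta>))"
        using that \<eta>(1) L2_norm_nonneg[of v] L2_norm_nonneg[of g]
        by (intro mult_left_mono) simp_all
      finally show ?thesis .
    qed
    moreover have "L2_norm v * e \<le> L2_norm v * (e + 2 * L2_norm g / \<eta> * \<bar>h\<bar>)"
      and "L2_norm v * (2 * L2_norm g * (\<bar>h\<bar> / \<eta>)) \<le> L2_norm v * (e + 2 * L2_norm g / \<eta> * \<bar>h\<bar>)"
      using \<open>e > 0\<close> \<eta>(1) L2_norm_nonneg[of v] L2_norm_nonneg[of g] by (intro mult_left_mono; simp)+
    ultimately show ?thesis
      by fastforce
  qed
  with \<eta>(1) that show ?thesis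
    by blast
qed

section \<open>Distribution functions of Dirac masses\<close>

definition dirac_cdf_diff :: "real \<Rightarrow> real \<Rightarrow> real \<Rightarrow> real" where
  "dirac_cdf_diff x y u = indicator {x + y..} u - indicator {x..} u"

lemma dirac_cdf_diff_measurable[measurable (raw)]:
  assumes [measurable]: "x \<in> borel_measurable M" "y \<in> borel_measurable M" "u \<in> borel_measurable M"
  shows "(\<lambda>z. dirac_cdf_diff (x z) (y z) (u z)) \<in> borel_measurable M"
proof -
  have "(\<lambda>z. dirac_cdf_diff (x z) (y z) (u z))
      = (\<lambda>z. (if x z + y z \<le> u z then 1 else 0) - (if x z \<le> u z then 1 else 0))"
    by (auto simp: dirac_cdf_diff_def indicator_def)
  then show ?thesis
    by simp
qed

lemma abs_dirac_cdf_diff: "\<bar>dirac_cdf_diff x y u\<bar> = indicator {min x (x + y)..<max x (x + y)} u"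
  by (auto simp: dirac_cdf_diff_def indicator_def)

lemma integrable_abs_dirac_cdf_diff: "integrable lborel (\<lambda>u. \<bar>dirac_cdf_diff x y u\<bar>)"
  by (simp add: abs_dirac_cdf_diff)

lemma integral_abs_dirac_cdf_diff: "(LINT u|lborel. \<bar>dirac_cdf_diff x y u\<bar>) = \<bar>y\<bar>"
  by (simp add: abs_dirac_cdf_diff)

lemma integral_dirac_cdf_diff_mult:
  fixes \<phi> :: "real \<Rightarrow> real"
  assumes [measurable]: "\<phi> \<in> borel_measurable borel"
  shows "(LINT u|lborel. dirac_cdf_diff x y u * \<phi> u) = - y * (LINT l:{0..1}|lborel. \<phi> (x + l * y))"
proof (cases "y = 0")
  case True
  then show ?thesis
    by (simp add: dirac_cdf_diff_def)
next
  case False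
  have D_affine: "\<bar>y\<bar> * dirac_cdf_diff x y (x + y * l) = - y * indicator {0..1} l"
    if "l \<noteq> 0" "l \<noteq> 1" for l
    using False that
    by (cases "y > 0") (auto simp: dirac_cdf_diff_def indicator_def mult_le_cancel_left1 zero_le_mult_iff)
  have "AE l in lborel. \<bar>y\<bar> * (dirac_cdf_diff x y (x + y * l) * \<phi> (x + y * l))
      = - y * (indicator {0..1} l * \<phi> (x + l * y))"
    using AE_lborel_singleton[of 0] AE_lborel_singleton[of 1]
    by eventually_elim (simp add: D_affine mult.assoc[symmetric] mult.commute[of _ y])
  then have "(LINT l|lborel. \<bar>y\<bar> * (dirac_cdf_diff x y (x + y * l) * \<phi> (x + y * l)))
      = (LINT l|lborel. - y * (indicator {0..1} l * \<phi> (x + l * y)))"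
    by (intro integral_cong_AE) measurable
  moreover have "(LINT u|lborel. dirac_cdf_diff x y u * \<phi> u)
      = \<bar>y\<bar> * (LINT l|lborel. dirac_cdf_diff x y (x + y * l) * \<phi> (x + y * l))"
    using lborel_integral_real_affine[where c=y and t=x and f="\<lambda>u. dirac_cdf_diff x y u * \<phi> u"] False
    by simp
  ultimately show ?thesis
    by (simp add: set_lebesgue_integral_def)
qed

lemma cdf_distr_add_diff:
  assumes "prob_space M" and [measurable]: "X \<in> borel_measurable M" "Y \<in> borel_measurable M"
  shows "cdf (distr M borel (\<lambda>w. X w + Y w)) u - cdf (distr M borel X) u
    = (LINT w|M. dirac_cdf_diff (X w) (Y w) u)"
proof -
  interpret prob_space M by fact
  have cdf_eq: "cdf (distr M borel Z) u = (LINT w|M. indicator {Z w..} u)"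
    if [measurable]: "Z \<in> borel_measurable M" for Z
  proof -
    have "cdf (distr M borel Z) u = measure M (Z -` {..u} \<inter> space M)"
      unfolding cdf_def2 by (rule measure_distr) auto
    also have "\<dots> = (LINT w|M. indicator (Z -` {..u} \<inter> space M) w)"
      by simp
    also have "\<dots> = (LINT w|M. indicator {Z w..} u)"
      by (rule Bochner_Integration.integral_cong) (auto simp: indicator_def)
    finally show ?thesis .
  qed
  have "integrable M (\<lambda>w. indicator {Z w..} u :: real)" if [measurable]: "Z \<in> borel_measurable M" for Z
    by (rule integrable_const_bound[where B=1]) (auto simp: indicator_def)
  then show ?thesis
    by (simp add: cdf_eq dirac_cdf_diff_def)
qed

lemma
  fixes X Y :: "'a \<Rightarrow> real" and \<psi> :: "real \<Rightarrow> real"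
  assumes "sigma_finite_measure M"
    and [measurable]: "X \<in> borel_measurable M" "Y \<in> borel_measurable M" and Y: "integrable M Y"
    and [measurable]: "\<psi> \<in> borel_measurable borel" and \<psi>_bound: "\<And>u. \<bar>\<psi> u\<bar> \<le> B"
  shows integrable_expectation_dirac_cdf_diff_mult:
      "integrable lborel (\<lambda>u. (LINT w|M. dirac_cdf_diff (X w) (Y w) u) * \<psi> u)"
    and integral_expectation_dirac_cdf_diff_mult:
      "(LINT u|lborel. (LINT w|M. dirac_cdf_diff (X w) (Y w) u) * \<psi> u)
        = (LINT w|M. - Y w * (LINT l:{0..1}|lborel. \<psi> (X w + l * Y w)))"
    and integrable_mult_set_integral_segment:
      "integrable M (\<lambda>w. Y w * (LINT l:{0..1}|lborel. \<psi> (X w + l * Y w)))"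
proof -
  interpret pair_sigma_finite M lborel
    using assms(1) by (simp add: pair_sigma_finite_def lborel.sigma_finite_measure_axioms)
  define J where "J w u = dirac_cdf_diff (X w) (Y w) u * \<psi> u" for w u
  have J_meas: "case_prod J \<in> borel_measurable (M \<Otimes>\<^sub>M lborel)"
    unfolding J_def by measurable
  have "0 \<le> B"
    using \<psi>_bound[of 0] by linarith
  have J_bound: "\<bar>J w u\<bar> \<le> B * \<bar>dirac_cdf_diff (X w) (Y w) u\<bar>" for w u
    using \<psi>_bound[of u] by (simp add: J_def abs_mult mult.commute[of _ "\<bar>\<psi> u\<bar>"] mult_right_mono)
  have J_int: "integrable lborel (J w)" for w
  proof (rule Bochner_Integration.integrable_bound)
    show "integrable lborel (\<lambda>u. B * \<bar>dirac_cdf_diff (X w) (Y w) u\<bar>)"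
      using integrable_abs_dirac_cdf_diff by simp
    show "AE u in lborel. norm (J w u) \<le> norm (B * \<bar>dirac_cdf_diff (X w) (Y w) u\<bar>)"
      using J_bound \<open>0 \<le> B\<close> by (simp add: abs_mult)
  qed (unfold J_def, measurable)
  have "(LINT u|lborel. \<bar>J w u\<bar>) \<le> B * \<bar>Y w\<bar>" for w
  proof -
    have "(LINT u|lborel. \<bar>J w u\<bar>) \<le> (LINT u|lborel. B * \<bar>dirac_cdf_diff (X w) (Y w) u\<bar>)"
      using J_int integrable_abs_dirac_cdf_diff J_bound by (intro integral_mono) auto
    then show ?thesis
      by (simp add: integral_abs_dirac_cdf_diff)
  qed
  then have J_prod: "integrable (M \<Otimes>\<^sub>M lborel) (case_prod J)"
    using Y by (intro Fubini_integrable_lborel[OF assms(1) J_meas J_int, of "\<lambda>w. B * \<bar>Y w\<bar>"]) auto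
  have "(LINT w|M. J w u) = (LINT w|M. dirac_cdf_diff (X w) (Y w) u) * \<psi> u" for u
    by (simp add: J_def)
  moreover have "(LINT u|lborel. J w u) = - Y w * (LINT l:{0..1}|lborel. \<psi> (X w + l * Y w))" for w
    unfolding J_def by (rule integral_dirac_cdf_diff_mult) measurable
  ultimately show "integrable lborel (\<lambda>u. (LINT w|M. dirac_cdf_diff (X w) (Y w) u) * \<psi> u)"
    and "(LINT u|lborel. (LINT w|M. dirac_cdf_diff (X w) (Y w) u) * \<psi> u)
        = (LINT w|M. - Y w * (LINT l:{0..1}|lborel. \<psi> (X w + l * Y w)))"
    and "integrable M (\<lambda>w. Y w * (LINT l:{0..1}|lborel. \<psi> (X w + l * Y w)))"
    using integrable_snd[OF J_prod] integral_fst[OF J_prod] integral_snd[OF J_prod]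
      integrable_minus[OF integrable_fst[OF J_prod]]
    by simp_all
qed

section \<open>Expansion of the lift\<close>

lemma L2_inner_EgY:
  assumes "prob_space M" and g: "sq_int g" and X: "RV_L2 M X" and Y: "RV_L2 M Y" and v: "sq_int v"
  shows "L2_inner (EgY g M X Y) v = (LINT w|M. Y w * xcorr v g (X w))"
    and "integrable M (\<lambda>w. Y w * xcorr v g (X w))"
proof -
  interpret prob_space M by fact
  interpret pair_sigma_finite M lborel ..
  have [measurable]: "g \<in> borel_measurable borel" "v \<in> borel_measurable borel"
    "X \<in> borel_measurable M" "Y \<in> borel_measurable M"
    using g v X Y by (auto simp: sq_int_def RV_L2_def)
  define H where "H w t = v t * g (t - X w) * Y w" for w t
  have H_meas: "case_prod H \<in> borel_measurable (M \<Otimes>\<^sub>M lborel)"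
    unfolding H_def by measurable
  have H_int: "integrable lborel (H w)" for w
    unfolding H_def by (intro integrable_mult_left sq_int_integrable_mult[OF v sq_int_shift(1)[OF g]])
  have "(LINT t|lborel. \<bar>H w t\<bar>) \<le> L2_norm v * L2_norm g * \<bar>Y w\<bar>" for w
  proof -
    have "(LINT t|lborel. \<bar>H w t\<bar>) = (LINT t|lborel. \<bar>v t * g (t - X w)\<bar>) * \<bar>Y w\<bar>"
      by (simp add: H_def abs_mult)
    also have "\<dots> \<le> L2_norm v * L2_norm g * \<bar>Y w\<bar>"
      using sq_int_integral_abs_mult_le[OF v sq_int_shift(1)[OF g]] sq_int_shift(2)[OF g]
      by (intro mult_right_mono) auto
    finally show ?thesis .
  qed
  then have H_prod: "integrable (M \<Otimes>\<^sub>M lborel) (case_prod H)"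
    using RV_L2_integrable[OF assms(1) Y]
    by (intro Fubini_integrable_lborel[OF prob_space_imp_sigma_finite[OF assms(1)] H_meas H_int,
      of "\<lambda>w. L2_norm v * L2_norm g * \<bar>Y w\<bar>"]) auto
  have "(\<lambda>w. H w t) = (\<lambda>w. v t * (g (t - X w) * Y w))" for t
    by (auto simp: H_def)
  then have "(LINT w|M. H w t) = EgY g M X Y t * v t" for t
    by (simp add: EgY_def mult.commute)
  moreover have "(LINT t|lborel. H w t) = Y w * xcorr v g (X w)" for w
    by (simp add: H_def xcorr_def ac_simps)
  ultimately show "L2_inner (EgY g M X Y) v = (LINT w|M. Y w * xcorr v g (X w))"
    and "integrable M (\<lambda>w. Y w * xcorr v g (X w))"
    using integral_fst[OF H_prod] integral_snd[OF H_prod] integrable_fst[OF H_prod]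
    by (simp_all add: L2_inner_def)
qed

lemma
  assumes "prob_space M" and g: "sq_int g" and X: "RV_L2 M X" and Y: "RV_L2 M Y"
  shows integrable_square_shift_mult: "integrable (M \<Otimes>\<^sub>M lborel) (\<lambda>(w, t). (g (t - X w) * Y w)\<^sup>2)"
    and integral_square_shift_mult:
      "(LINT t|lborel. LINT w|M. (g (t - X w) * Y w)\<^sup>2) = (L2_norm g * RV_norm M Y)\<^sup>2"
proof -
  interpret prob_space M by fact
  interpret pair_sigma_finite M lborel ..
  have [measurable]: "g \<in> borel_measurable borel" "X \<in> borel_measurable M" "Y \<in> borel_measurable M"
    and Y2: "integrable M (\<lambda>w. (Y w)\<^sup>2)"
    using g X Y by (auto simp: sq_int_def RV_L2_def)
  define F where "F w t = (g (t - X w) * Y w)\<^sup>2" for w t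
  have F_meas: "case_prod F \<in> borel_measurable (M \<Otimes>\<^sub>M lborel)"
    unfolding F_def by measurable
  have F_int: "integrable lborel (F w)" for w
    using sq_int_shift(1)[OF g, of "X w"] unfolding F_def power_mult_distrib sq_int_def
    by (intro integrable_mult_left) simp
  have F_integral: "(LINT t|lborel. F w t) = (L2_norm g)\<^sup>2 * (Y w)\<^sup>2" for w
    using sq_int_shift(2)[OF g, of "X w"] L2_norm_square[of "\<lambda>t. g (t - X w)"]
    by (simp add: F_def power_mult_distrib)
  then have F_prod: "integrable (M \<Otimes>\<^sub>M lborel) (case_prod F)"
    using Y2 by (intro Fubini_integrable_lborel[OF prob_space_imp_sigma_finite[OF assms(1)] F_meas F_int,
      of "\<lambda>w. (L2_norm g)\<^sup>2 * (Y w)\<^sup>2"]) (auto simp: F_def)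
  then show "integrable (M \<Otimes>\<^sub>M lborel) (\<lambda>(w, t). (g (t - X w) * Y w)\<^sup>2)"
    by (simp add: F_def[abs_def])
  have "(LINT t|lborel. LINT w|M. F w t) = (L2_norm g * RV_norm M Y)\<^sup>2"
    using integral_fst[OF F_prod] integral_snd[OF F_prod] F_integral
    by (simp add: RV_norm_square power_mult_distrib)
  then show "(LINT t|lborel. LINT w|M. (g (t - X w) * Y w)\<^sup>2) = (L2_norm g * RV_norm M Y)\<^sup>2"
    by (simp add: F_def)
qed

lemma
  assumes "prob_space M" and g: "sq_int g" and X: "RV_L2 M X" and Y: "RV_L2 M Y"
  shows sq_int_EgY: "sq_int (EgY g M X Y)"
    and L2_norm_EgY_le: "L2_norm (EgY g M X Y) \<le> L2_norm g * RV_norm M Y"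
proof -
  interpret prob_space M by fact
  interpret P: pair_sigma_finite M lborel ..
  have [measurable]: "g \<in> borel_measurable borel" "X \<in> borel_measurable M" "Y \<in> borel_measurable M"
    using g X Y by (auto simp: sq_int_def RV_L2_def)
  note F_prod = integrable_square_shift_mult[OF assms]
  have "(\<lambda>t. LINT w|M. g (t - X w) * Y w) \<in> borel_measurable lborel"
    by (rule borel_measurable_lebesgue_integral) measurable
  then have [measurable]: "EgY g M X Y \<in> borel_measurable lborel"
    by (simp add: EgY_def[abs_def])
  have EgY2_le: "AE t in lborel. (EgY g M X Y t)\<^sup>2 \<le> (LINT w|M. (g (t - X w) * Y w)\<^sup>2)"
    using P.AE_integrable_snd[OF F_prod]
    by eventually_elim (simp add: EgY_def square_expectation_le)
  have EgY2: "integrable lborel (\<lambda>t. (EgY g M X Y t)\<^sup>2)"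
  proof (rule Bochner_Integration.integrable_bound[OF P.integrable_snd[OF F_prod]])
    show "AE t in lborel. norm ((EgY g M X Y t)\<^sup>2) \<le> norm (LINT w|M. (g (t - X w) * Y w)\<^sup>2)"
      using EgY2_le by eventually_elim simp
  qed measurable
  have "(LINT t|lborel. (EgY g M X Y t)\<^sup>2) \<le> (L2_norm g * RV_norm M Y)\<^sup>2"
    using integral_mono_AE[OF EgY2 P.integrable_snd[OF F_prod] EgY2_le] integral_square_shift_mult[OF assms]
    by simp
  then have "sqrt (LINT t|lborel. (EgY g M X Y t)\<^sup>2) \<le> sqrt ((L2_norm g * RV_norm M Y)\<^sup>2)"
    by (rule real_sqrt_le_mono)
  then show "sq_int (EgY g M X Y)" and "L2_norm (EgY g M X Y) \<le> L2_norm g * RV_norm M Y"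
    using EgY2 L2_norm_nonneg[of g] RV_norm_nonneg[of M Y] by (simp_all add: sq_int_def L2_norm_def)
qed

lemma integral_mult_conv_eq_integral_xcorr:
  assumes v: "sq_int v" and g: "sq_int g" and \<phi>: "integrable lborel \<phi>"
  shows "(LINT t|lborel. v t * (LINT u|lborel. g (t - u) * \<phi> u)) = (LINT u|lborel. \<phi> u * xcorr v g u)"
proof -
  have [measurable]: "g \<in> borel_measurable borel" "v \<in> borel_measurable borel" "\<phi> \<in> borel_measurable borel"
    using v g \<phi> by (auto simp: sq_int_def)
  define K where "K u t = v t * g (t - u) * \<phi> u" for u t
  have K_meas: "case_prod K \<in> borel_measurable (lborel \<Otimes>\<^sub>M lborel)"
    unfolding K_def by measurable
  have K_int: "integrable lborel (K u)" for u
    unfolding K_def by (intro integrable_mult_left sq_int_integrable_mult[OF v sq_int_shift(1)[OF g]])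
  have "(LINT t|lborel. \<bar>K u t\<bar>) \<le> L2_norm v * L2_norm g * \<bar>\<phi> u\<bar>" for u
  proof -
    have "(LINT t|lborel. \<bar>K u t\<bar>) = (LINT t|lborel. \<bar>v t * g (t - u)\<bar>) * \<bar>\<phi> u\<bar>"
      by (simp add: K_def abs_mult)
    also have "\<dots> \<le> L2_norm v * L2_norm g * \<bar>\<phi> u\<bar>"
      using sq_int_integral_abs_mult_le[OF v sq_int_shift(1)[OF g]] sq_int_shift(2)[OF g]
      by (intro mult_right_mono) auto
    finally show ?thesis .
  qed
  then have K_prod: "integrable (lborel \<Otimes>\<^sub>M lborel) (case_prod K)"
    using \<phi> by (intro Fubini_integrable_lborel[OF lborel.sigma_finite_measure_axioms K_meas K_int,
      of "\<lambda>u. L2_norm v * L2_norm g * \<bar>\<phi> u\<bar>"]) auto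
  have "(LINT u|lborel. K u t) = v t * (LINT u|lborel. g (t - u) * \<phi> u)" for t
    by (simp add: K_def mult.assoc)
  moreover have "(LINT t|lborel. K u t) = \<phi> u * xcorr v g u" for u
    by (simp add: K_def xcorr_def mult.commute)
  ultimately show ?thesis
    using lborel_pair.integral_fst[OF K_prod] lborel_pair.integral_snd[OF K_prod] by simp
qed

definition conv_cdf_sq_int :: "(real \<Rightarrow> real) \<Rightarrow> bool" where
  "conv_cdf_sq_int g \<longleftrightarrow> (\<forall>\<mu>. P2 \<mu> \<longrightarrow>
    (AE t in lborel. integrable lborel (\<lambda>w. g (t - w) * cdf \<mu> w)) \<and> sq_int (fconv g \<mu>))"

lemma conv_cdf_sq_int_lift:
  assumes "conv_cdf_sq_int g" and "prob_space M" and "RV_L2 M Z"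
  shows "AE t in lborel. integrable lborel (\<lambda>u. g (t - u) * cdf (distr M borel Z) u)"
    and "sq_int (lift g M Z)"
  using assms P2_distr[OF assms(2,3)] by (auto simp: conv_cdf_sq_int_def lift_def)

lemma lift_add_diff_AE:
  assumes P: "prob_space M" and g: "conv_cdf_sq_int g" and X: "RV_L2 M X" and Y: "RV_L2 M Y"
  shows "AE t in lborel. lift g M (\<lambda>w. X w + Y w) t - lift g M X t
    = (LINT u|lborel. g (t - u) * (LINT w|M. dirac_cdf_diff (X w) (Y w) u))"
  using conv_cdf_sq_int_lift(1)[OF g P RV_L2_add[OF X Y]] conv_cdf_sq_int_lift(1)[OF g P X]
proof eventually_elim
  case (elim t)
  have [measurable]: "X \<in> borel_measurable M" "Y \<in> borel_measurable M"
    using X Y by (auto simp: RV_L2_def)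
  from elim have "lift g M (\<lambda>w. X w + Y w) t - lift g M X t = (LINT u|lborel.
      g (t - u) * cdf (distr M borel (\<lambda>w. X w + Y w)) u - g (t - u) * cdf (distr M borel X) u)"
    by (simp add: lift_def fconv_def)
  also have "\<dots> = (LINT u|lborel. g (t - u) * (LINT w|M. dirac_cdf_diff (X w) (Y w) u))"
    using cdf_distr_add_diff[OF P, of X Y] by (simp flip: right_diff_distrib)
  finally show ?case .
qed

lemma
  assumes P: "prob_space M" and g: "sq_int g" and g_conv: "conv_cdf_sq_int g"
    and X: "RV_L2 M X" and Y: "RV_L2 M Y" and v: "sq_int v"
  shows L2_inner_lift_diff:
      "L2_inner (lift g M (\<lambda>w. X w + Y w)) v - L2_inner (lift g M X) v
        = (LINT w|M. - Y w * (LINT l:{0..1}|lborel. xcorr v g (X w + l * Y w)))"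
    and integrable_mult_xcorr_segment:
      "integrable M (\<lambda>w. Y w * (LINT l:{0..1}|lborel. xcorr v g (X w + l * Y w)))"
proof -
  have XY_meas[measurable]: "X \<in> borel_measurable M" "Y \<in> borel_measurable M"
    using X Y by (auto simp: RV_L2_def)
  note sigma_finite = prob_space_imp_sigma_finite[OF P] and Y_int = RV_L2_integrable[OF P Y]
  note sq_int_lift = conv_cdf_sq_int_lift(2)[OF g_conv P]
  define F where "F u = (LINT w|M. dirac_cdf_diff (X w) (Y w) u)" for u
  have F_int: "integrable lborel F"
    using integrable_expectation_dirac_cdf_diff_mult[OF sigma_finite XY_meas Y_int, of "\<lambda>_. 1" 1]
    by (simp add: F_def[abs_def])
  have [measurable]: "g \<in> borel_measurable borel" "v \<in> borel_measurable borel" "F \<in> borel_measurable borel"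
    using g v F_int by (auto simp: sq_int_def)
  have "AE t in lborel. lift g M (\<lambda>w. X w + Y w) t - lift g M X t = (LINT u|lborel. g (t - u) * F u)"
    using lift_add_diff_AE[OF P g_conv X Y] by (simp add: F_def)
  then have "(LINT t|lborel. (lift g M (\<lambda>w. X w + Y w) t - lift g M X t) * v t)
      = (LINT t|lborel. v t * (LINT u|lborel. g (t - u) * F u))"
    using sq_int_lift[OF RV_L2_add[OF X Y]] sq_int_lift[OF X]
    by (intro integral_cong_AE) (auto simp: sq_int_def intro!: lborel.borel_measurable_lebesgue_integral)
  then have "L2_inner (lift g M (\<lambda>w. X w + Y w)) v - L2_inner (lift g M X) v = (LINT u|lborel. F u * xcorr v g u)"
    using sq_int_integrable_mult[OF sq_int_lift[OF RV_L2_add[OF X Y]] v] sq_int_integrable_mult[OF sq_int_lift[OF X] v]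
      integral_mult_conv_eq_integral_xcorr[OF v g F_int]
    by (simp add: L2_inner_def left_diff_distrib)
  moreover note integral_expectation_dirac_cdf_diff_mult[OF sigma_finite XY_meas Y_int
      xcorr_measurable[OF v g] abs_xcorr_le[OF v g]]
    integrable_mult_set_integral_segment[OF sigma_finite XY_meas Y_int xcorr_measurable[OF v g] abs_xcorr_le[OF v g]]
  ultimately show "L2_inner (lift g M (\<lambda>w. X w + Y w)) v - L2_inner (lift g M X) v
        = (LINT w|M. - Y w * (LINT l:{0..1}|lborel. xcorr v g (X w + l * Y w)))"
    and "integrable M (\<lambda>w. Y w * (LINT l:{0..1}|lborel. xcorr v g (X w + l * Y w)))"
    by (simp_all add: F_def)
qed

lemma set_integral_segment_diff:
  fixes c :: "real \<Rightarrow> real"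
  assumes [measurable]: "c \<in> borel_measurable borel" and c_bound: "\<And>s. \<bar>c s\<bar> \<le> B"
  shows "(LINT l:{0..1}|lborel. (c (x + l * y) - c x) * y) = y * (LINT l:{0..1}|lborel. c (x + l * y)) - y * c x"
proof -
  have seg: "integrable lborel (\<lambda>l. indicator {0..1} l * c (x + l * y))"
  proof (rule Bochner_Integration.integrable_bound)
    show "integrable lborel (\<lambda>l::real. indicator {0..1} l * B :: real)"
      by (intro integrable_mult_left integrable_real_indicator) auto
    show "AE l in lborel. norm (indicator {0..1} l * c (x + l * y)) \<le> norm (indicator {0..1::real} l * B :: real)"
      using c_bound by (intro AE_I2) (auto simp: indicator_def intro: order_trans[OF _ abs_ge_self])
  qed measurable
  have "(LINT l:{0..1}|lborel. (c (x + l * y) - c x) * y)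
      = (LINT l|lborel. y * (indicator {0..1} l * c (x + l * y)) - y * c x * indicator {0..1} l)"
    unfolding set_lebesgue_integral_def by (rule Bochner_Integration.integral_cong) (auto simp: algebra_simps)
  also have "\<dots> = y * (LINT l:{0..1}|lborel. c (x + l * y)) - y * c x"
    using seg by (simp add: set_lebesgue_integral_def)
  finally show ?thesis .
qed

lemma abs_set_integral_unit_interval_le:
  fixes F :: "real \<Rightarrow> real"
  assumes "\<And>l. l \<in> {0..1} \<Longrightarrow> \<bar>F l\<bar> \<le> K"
  shows "\<bar>LINT l:{0..1}|lborel. F l\<bar> \<le> K"
proof -
  have "0 \<le> K"
    using assms[of 0] by auto
  have "\<bar>LINT l:{0..1}|lborel. F l\<bar> \<le> (LINT l|lborel. \<bar>indicator {0..1} l * F l\<bar>)"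
    using integral_abs_bound[of lborel "\<lambda>l. indicator {0..1} l * F l"]
    by (simp add: set_lebesgue_integral_def)
  also have "\<dots> \<le> (LINT l|lborel. indicator {0..1::real} l * K)"
    using assms \<open>0 \<le> K\<close>
    by (intro Bochner_Integration.integral_mono' integrable_mult_left integrable_real_indicator)
      (auto simp: indicator_def)
  also have "\<dots> = K"
    by simp
  finally show ?thesis .
qed

lemma Rem_eq:
  assumes g: "sq_int g" and v: "sq_int v"
    and "integrable M (\<lambda>w. Y w * (LINT l:{0..1}|lborel. xcorr v g (X w + l * Y w)))"
    and "integrable M (\<lambda>w. Y w * xcorr v g (X w))"
  shows "Rem g M X Y v = (LINT w|M. - Y w * (LINT l:{0..1}|lborel. xcorr v g (X w + l * Y w)))
    + (LINT w|M. Y w * xcorr v g (X w))"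
  using assms set_integral_segment_diff[OF xcorr_measurable[OF v g] abs_xcorr_le[OF v g]]
  by (simp add: Rem_def conv_fun_gcheck Bochner_Integration.integral_diff)

lemma abs_Rem_le:
  assumes "prob_space M" and Y: "RV_L2 M Y" and "0 \<le> e" "0 \<le> C"
    and increment: "\<And>s h. \<bar>xcorr v g (s + h) - xcorr v g s\<bar> \<le> L2_norm v * (e + C * \<bar>h\<bar>)"
  shows "\<bar>Rem g M X Y v\<bar> \<le> L2_norm v * (e * RV_norm M Y + C * (RV_norm M Y)\<^sup>2)"
proof -
  have [measurable]: "Y \<in> borel_measurable M" and Y2: "integrable M (\<lambda>w. (Y w)\<^sup>2)"
    using Y by (auto simp: RV_L2_def)
  have Y_abs: "integrable M (\<lambda>w. \<bar>Y w\<bar>)"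
    using RV_L2_integrable[OF assms(1) Y] by simp
  define b where "b w = L2_norm v * (e * \<bar>Y w\<bar> + C * (Y w)\<^sup>2)" for w
  have pointwise: "\<bar>LINT l:{0..1}|lborel. (conv_fun v (gcheck g) (X w + l * Y w) - conv_fun v (gcheck g) (X w)) * Y w\<bar>
      \<le> b w" for w
    unfolding conv_fun_gcheck
  proof (rule abs_set_integral_unit_interval_le)
    fix l :: real
    assume "l \<in> {0..1}"
    then have "\<bar>l * Y w\<bar> \<le> \<bar>Y w\<bar>"
      by (auto simp: abs_mult intro: mult_left_le_one_le)
    then have "L2_norm v * (e + C * \<bar>l * Y w\<bar>) \<le> L2_norm v * (e + C * \<bar>Y w\<bar>)"
      using \<open>0 \<le> C\<close> L2_norm_nonneg[of v] by (intro mult_left_mono add_left_mono) auto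
    then have "\<bar>xcorr v g (X w + l * Y w) - xcorr v g (X w)\<bar> \<le> L2_norm v * (e + C * \<bar>Y w\<bar>)"
      using increment[of "X w" "l * Y w"] by linarith
    then have "\<bar>xcorr v g (X w + l * Y w) - xcorr v g (X w)\<bar> * \<bar>Y w\<bar> \<le> L2_norm v * (e + C * \<bar>Y w\<bar>) * \<bar>Y w\<bar>"
      by (rule mult_right_mono) simp
    moreover have "L2_norm v * (e + C * \<bar>Y w\<bar>) * \<bar>Y w\<bar> = b w"
      by (simp add: b_def algebra_simps power2_eq_square abs_mult_self_eq)
    ultimately show "\<bar>(xcorr v g (X w + l * Y w) - xcorr v g (X w)) * Y w\<bar> \<le> b w"
      by (simp add: abs_mult)
  qed
  have "\<bar>Rem g M X Y v\<bar> \<le> (LINT w|M. b w)"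
    unfolding Rem_def abs_minus_cancel
    using Y_abs Y2 pointwise L2_norm_nonneg[of v] \<open>0 \<le> e\<close> \<open>0 \<le> C\<close> by (intro order_trans[OF integral_abs_bound] Bochner_Integration.integral_mono') (auto simp: b_def)
  also have "\<dots> = L2_norm v * (e * (LINT w|M. \<bar>Y w\<bar>) + C * (RV_norm M Y)\<^sup>2)"
    using Y_abs Y2 by (simp add: b_def RV_norm_square)
  also have "\<dots> \<le> L2_norm v * (e * RV_norm M Y + C * (RV_norm M Y)\<^sup>2)"
    using expectation_abs_le_RV_norm[OF assms(1) Y] \<open>0 \<le> e\<close> L2_norm_nonneg[of v]
    by (intro mult_left_mono add_right_mono) auto
  finally show ?thesis .
qed

lemma Rem_small:
  assumes P: "prob_space M" and g: "sq_int g" and "e > 0"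
  obtains d where "d > 0"
    "\<And>Y v. RV_L2 M Y \<Longrightarrow> RV_norm M Y < d \<Longrightarrow> sq_int v \<Longrightarrow>
      \<bar>Rem g M X Y v\<bar> \<le> e * RV_norm M Y * L2_norm v"
proof -
  obtain \<eta> where \<eta>: "\<eta> > 0"
    and increment: "\<And>v s h. sq_int v \<Longrightarrow>
      \<bar>xcorr v g (s + h) - xcorr v g s\<bar> \<le> L2_norm v * (e/2 + 2 * L2_norm g / \<eta> * \<bar>h\<bar>)"
    using xcorr_increment_bound[OF g, of "e/2"] \<open>e > 0\<close> by auto
  define C where "C = 2 * L2_norm g / \<eta>"
  have "0 \<le> C"
    using \<eta> L2_norm_nonneg[of g] by (simp add: C_def)
  define d where "d = e / (2 * C + 1)"
  have "d > 0"
    using \<open>e > 0\<close> \<open>0 \<le> C\<close> by (simp add: d_def)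
  have "\<bar>Rem g M X Y v\<bar> \<le> e * RV_norm M Y * L2_norm v"
    if Y: "RV_L2 M Y" "RV_norm M Y < d" and v: "sq_int v" for Y v
  proof -
    have "C * RV_norm M Y \<le> C * d"
      using Y(2) \<open>0 \<le> C\<close> by (intro mult_left_mono) auto
    also have "\<dots> \<le> e/2"
      using \<open>e > 0\<close> \<open>0 \<le> C\<close> by (simp add: d_def field_simps)
    finally have "C * RV_norm M Y * RV_norm M Y \<le> e/2 * RV_norm M Y"
      using RV_norm_nonneg[of M Y] by (rule mult_right_mono)
    then have "e/2 * RV_norm M Y + C * (RV_norm M Y)\<^sup>2 \<le> e * RV_norm M Y"
      by (simp add: power2_eq_square mult.assoc)
    then have "L2_norm v * (e/2 * RV_norm M Y + C * (RV_norm M Y)\<^sup>2) \<le> L2_norm v * (e * RV_norm M Y)"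
      using L2_norm_nonneg[of v] by (rule mult_left_mono)
    moreover have "\<bar>Rem g M X Y v\<bar> \<le> L2_norm v * (e/2 * RV_norm M Y + C * (RV_norm M Y)\<^sup>2)"
      using \<open>e > 0\<close> \<open>0 \<le> C\<close> increment[OF v] by (intro abs_Rem_le[OF P Y(1)]) (simp_all add: C_def)
    ultimately show ?thesis
      by (simp add: ac_simps)
  qed
  with \<open>d > 0\<close> that show ?thesis
    by blast
qed

lemma L2_inner_lift_expansion:
  assumes P: "prob_space M" and g: "sq_int g" and g_conv: "conv_cdf_sq_int g"
    and X: "RV_L2 M X" and Y: "RV_L2 M Y" and v: "sq_int v"
  shows "L2_inner (lift g M (\<lambda>w. X w + Y w)) v
    = L2_inner (lift g M X) v - L2_inner (EgY g M X Y) v + Rem g M X Y v"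
  using L2_inner_lift_diff[OF assms] L2_inner_EgY[OF P g X Y v]
    Rem_eq[OF g v integrable_mult_xcorr_segment[OF assms] L2_inner_EgY(2)[OF P g X Y v]]
  by simp

lemma L2_norm_lift_remainder_le:
  assumes P: "prob_space M" and g: "sq_int g" and g_conv: "conv_cdf_sq_int g"
    and X: "RV_L2 M X" and Y: "RV_L2 M Y" and "0 \<le> c"
    and Rem_le: "\<And>v. sq_int v \<Longrightarrow> \<bar>Rem g M X Y v\<bar> \<le> c * L2_norm v"
  shows "L2_norm (\<lambda>t. lift g M (\<lambda>w. X w + Y w) t - lift g M X t - (- EgY g M X Y t)) \<le> c"
proof -
  define r where "r t = lift g M (\<lambda>w. X w + Y w) t - lift g M X t - (- EgY g M X Y t)" for t
  note sq_int_lift = conv_cdf_sq_int_lift(2)[OF g_conv P]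
  have r: "sq_int r"
    using sq_int_add[OF sq_int_add[OF sq_int_lift[OF RV_L2_add[OF X Y]] sq_int_minus[OF sq_int_lift[OF X]]]
        sq_int_EgY[OF P g X Y]]
    by (simp add: r_def[abs_def])
  have "(L2_norm r)\<^sup>2
      = (LINT t|lborel. lift g M (\<lambda>w. X w + Y w) t * r t - lift g M X t * r t + EgY g M X Y t * r t)"
    unfolding L2_norm_square
    by (rule Bochner_Integration.integral_cong) (simp_all add: r_def power2_eq_square algebra_simps)
  also have "\<dots> = L2_inner (lift g M (\<lambda>w. X w + Y w)) r - L2_inner (lift g M X) r + L2_inner (EgY g M X Y) r"
    using sq_int_integrable_mult[OF sq_int_lift[OF RV_L2_add[OF X Y]] r]
      sq_int_integrable_mult[OF sq_int_lift[OF X] r] sq_int_integrable_mult[OF sq_int_EgY[OF P g X Y] r]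
    by (simp add: L2_inner_def)
  also have "\<dots> = Rem g M X Y r"
    using L2_inner_lift_expansion[OF P g g_conv X Y r] by simp
  also have "\<dots> \<le> c * L2_norm r"
    using Rem_le[OF r] by simp
  finally have "L2_norm r * L2_norm r \<le> c * L2_norm r"
    by (simp add: power2_eq_square)
  then show ?thesis
    using \<open>0 \<le> c\<close> L2_norm_nonneg[of r] by (cases "L2_norm r = 0") (simp_all add: r_def[abs_def])
qed

theorem lemma3p14:
  fixes M :: "'a::polish_space measure" and g :: "real \<Rightarrow> real" and X :: "'a \<Rightarrow> real"
  assumes "prob_space M" and "space M = UNIV"
    and "complete_measure_space M" and "atomless M"
    and g_L2: "sq_int g"
    and g_bdd: "\<exists>C. AE x in lborel. \<bar>g x\<bar> \<le> C"
    and g_conv: "\<forall>\<mu>. P2 \<mu> \<longrightarrow>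
        (AE t in lborel. integrable lborel (\<lambda>w. g (t - w) * cdf \<mu> w)) \<and> sq_int (fconv g \<mu>)"
    and X: "RV_L2 M X"
  shows
    "(\<forall>Y v. RV_L2 M Y \<longrightarrow> sq_int v \<longrightarrow>
        L2_inner (lift g M (\<lambda>w. X w + Y w)) v
          = L2_inner (lift g M X) v - L2_inner (EgY g M X Y) v + Rem g M X Y v)
     \<and> (\<forall>\<epsilon>>0. \<exists>\<delta>>0. \<forall>Y. RV_L2 M Y \<and> RV_norm M Y < \<delta> \<longrightarrow>
          (\<forall>v. sq_int v \<and> L2_norm v \<le> 1 \<longrightarrow> \<bar>Rem g M X Y v\<bar> \<le> \<epsilon> * RV_norm M Y))
     \<and> (\<forall>Y. RV_L2 M Y \<longrightarrow> sq_int (EgY g M X Y))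
     \<and> (\<exists>C. \<forall>Y. RV_L2 M Y \<longrightarrow> L2_norm (EgY g M X Y) \<le> C * RV_norm M Y)
     \<and> (\<forall>\<epsilon>>0. \<exists>\<delta>>0. \<forall>Y. RV_L2 M Y \<and> RV_norm M Y < \<delta> \<longrightarrow>
          L2_norm (\<lambda>t. lift g M (\<lambda>w. X w + Y w) t - lift g M X t - (- EgY g M X Y t))
            \<le> \<epsilon> * RV_norm M Y)"
proof (intro conjI allI impI)
  note P = \<open>prob_space M\<close>
  have g_conv': "conv_cdf_sq_int g"
    using g_conv by (simp add: conv_cdf_sq_int_def)
  show "L2_inner (lift g M (\<lambda>w. X w + Y w)) v
      = L2_inner (lift g M X) v - L2_inner (EgY g M X Y) v + Rem g M X Y v"
    if "RV_L2 M Y" "sq_int v" for Y v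
    using L2_inner_lift_expansion[OF P g_L2 g_conv' X that] .
  show "sq_int (EgY g M X Y)" if "RV_L2 M Y" for Y
    using sq_int_EgY[OF P g_L2 X that] .
  show "\<exists>C. \<forall>Y. RV_L2 M Y \<longrightarrow> L2_norm (EgY g M X Y) \<le> C * RV_norm M Y"
    using L2_norm_EgY_le[OF P g_L2 X] by blast
  fix \<epsilon> :: real
  assume "\<epsilon> > 0"
  then obtain \<delta> where "\<delta> > 0" and \<delta>: "\<And>Y v. RV_L2 M Y \<Longrightarrow> RV_norm M Y < \<delta> \<Longrightarrow> sq_int v \<Longrightarrow>
      \<bar>Rem g M X Y v\<bar> \<le> \<epsilon> * RV_norm M Y * L2_norm v"
    using Rem_small[OF P g_L2] by metis
  then show "\<exists>\<delta>>0. \<forall>Y. RV_L2 M Y \<and> RV_norm M Y < \<delta> \<longrightarrow>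
      (\<forall>v. sq_int v \<and> L2_norm v \<le> 1 \<longrightarrow> \<bar>Rem g M X Y v\<bar> \<le> \<epsilon> * RV_norm M Y)"
    using \<open>\<epsilon> > 0\<close> RV_norm_nonneg[of M] mult_left_le[of _ "\<epsilon> * RV_norm M _"]
    by (meson dual_order.trans mult_nonneg_nonneg less_imp_le)
  show "\<exists>\<delta>>0. \<forall>Y. RV_L2 M Y \<and> RV_norm M Y < \<delta> \<longrightarrow>
      L2_norm (\<lambda>t. lift g M (\<lambda>w. X w + Y w) t - lift g M X t - (- EgY g M X Y t)) \<le> \<epsilon> * RV_norm M Y"
  proof (intro exI[of _ \<delta>] conjI allI impI \<open>\<delta> > 0\<close>)
    fix Y
    assume "RV_L2 M Y \<and> RV_norm M Y < \<delta>"
    then show "L2_norm (\<lambda>t. lift g M (\<lambda>w. X w + Y w) t - lift g M X t - (- EgY g M X Y t)) \<le> \<epsilon> * RV_norm M Y"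
      using \<delta> \<open>\<epsilon> > 0\<close> RV_norm_nonneg[of M Y] by (intro L2_norm_lift_remainder_le[OF P g_L2 g_conv' X]) auto
  qed
qed

end
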